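(* Let $f:X\to X$ be a measurable map, $Y\subset X$ measurable, $\tau:Y\to\mathbb Z^+$ integrable with respect to a probability measure $\mu_Y$ on $Y$ that is invariant under $F:Y\to Y$, $F(y)=f^{\tau(y)}y$. Let $\bar\tau=\int_Y\tau\,d\mu_Y$, $\mu^\tau=(\mu_Y\times\text{counting})/\bar\tau$ on $Y^\tau=\{(y,\ell)\in Y\times\mathbb Z:0\le\ell\le\tau(y)-1\}$, and $\mu_X=\pi_*\mu^\tau$ where $\pi(y,\ell)=f^\ell y$. Let $h:X\to(0,\infty)$ be measurable and $H(y)=\sum_{\ell=0}^{\tau(y)-1}h(f^\ell y)$. Then \[ \mu_Y(H>t)\le\mu_Y(\tau>n)+\bar\tau\,\mu_X(h>t/n)\quad\text{for all }n\ge1,\ t>1. \] *)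

theory Defs
  imports "HOL-Probability.Probability"
begin

definition mean_return :: "'a measure \<Rightarrow> ('a \<Rightarrow> nat) \<Rightarrow> real" where
  "mean_return muY tau = integral\<^sup>L muY (\<lambda>y. real (tau y))"

definition tower_measure :: "'a measure \<Rightarrow> ('a \<Rightarrow> nat) \<Rightarrow> ('a \<times> nat) measure" where
  "tower_measure muY tau =
     density (muY \<Otimes>\<^sub>M count_space UNIV)
       (\<lambda>(y, l). ennreal (indicator {(y', l'). l' < tau y'} (y, l) / mean_return muY tau))"

definition tower_proj :: "('a \<Rightarrow> 'a) \<Rightarrow> 'a \<times> nat \<Rightarrow> 'a" where
  "tower_proj f = (\<lambda>(y, l). (f ^^ l) y)"

definition induced_measure :: "'a measure \<Rightarrow> ('a \<Rightarrow> 'a) \<Rightarrow> 'a measure \<Rightarrow> ('a \<Rightarrow> nat) \<Rightarrow> 'a measure" where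
  "induced_measure M f muY tau = distr (tower_measure muY tau) M (tower_proj f)"

definition induced_obs :: "('a \<Rightarrow> 'a) \<Rightarrow> ('a \<Rightarrow> nat) \<Rightarrow> ('a \<Rightarrow> real) \<Rightarrow> 'a \<Rightarrow> real" where
  "induced_obs f tau h y = (\<Sum>l<tau y. h ((f ^^ l) y))"

end

theory Submission
  imports Defs
begin

(* If H(y) > t while tau(y) <= n, then one of the at most n summands h(f^l y), l < tau(y), exceeds
   t/n: the column over y of the tower visits A = {h > t/n} under pi. So the indicator of {H > t} is
   bounded by that of {tau > n} plus the number of visits of the column to A, and integrating this
   number over mu_Y gives tau_bar * mu_X(A), because mu_X is the push-forward of the normalised tower
   measure. *)

lemma measurable_nat_of_real:
  fixes g :: "'a \<Rightarrow> nat"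
  assumes "(\<lambda>y. real (g y)) \<in> borel_measurable N"
  shows "g \<in> N \<rightarrow>\<^sub>M count_space UNIV"
proof -
  have "(\<lambda>y. nat \<lfloor>real (g y)\<rfloor>) \<in> N \<rightarrow>\<^sub>M count_space UNIV"
    using assms by measurable
  then show ?thesis by simp
qed

lemma measure_le_measure_add_nn_integral:
  assumes "finite_measure M" and S: "S \<in> sets M" and T: "T \<in> sets M"
    and G: "G \<in> borel_measurable M" and cover: "\<And>y. y \<in> S \<Longrightarrow> y \<notin> T \<Longrightarrow> 1 \<le> G y"
    and G_le: "(\<integral>\<^sup>+ y. G y \<partial>M) \<le> ennreal r" and "0 \<le> r"
  shows "measure M S \<le> measure M T + r"
proof -
  interpret finite_measure M by fact
  have "emeasure M S = (\<integral>\<^sup>+ y. indicator S y \<partial>M)"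
    using S by simp
  also have "\<dots> \<le> (\<integral>\<^sup>+ y. indicator T y + G y \<partial>M)"
    by (intro nn_integral_mono) (auto simp: indicator_def cover)
  also have "\<dots> = emeasure M T + (\<integral>\<^sup>+ y. G y \<partial>M)"
    using T G by (subst nn_integral_add) auto
  also have "\<dots> \<le> ennreal (measure M T) + ennreal r"
    using G_le by (simp add: emeasure_eq_measure add_left_mono)
  also have "\<dots> = ennreal (measure M T + r)"
    using \<open>0 \<le> r\<close> by (simp add: ennreal_plus)
  finally have "ennreal (measure M S) \<le> ennreal (measure M T + r)"
    by (simp add: emeasure_eq_measure)
  then show ?thesis
    using \<open>0 \<le> r\<close> by (metis ennreal_le_iff measure_nonneg add_nonneg_nonneg)
qed

lemma measurable_tower_proj:
  assumes "\<And>l. (f ^^ l) \<in> N \<rightarrow>\<^sub>M M"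
  shows "tower_proj f \<in> N \<Otimes>\<^sub>M count_space UNIV \<rightarrow>\<^sub>M M"
  unfolding tower_proj_def split_beta
  by (rule measurable_compose_countable[where f="\<lambda>l z. (f ^^ l) (fst z)" and g=snd])
     (auto intro: measurable_compose[OF measurable_fst assms])

lemma emeasure_tower_measure:
  assumes tau: "tau \<in> muY \<rightarrow>\<^sub>M count_space UNIV"
    and X: "X \<in> sets (muY \<Otimes>\<^sub>M count_space UNIV)"
  shows "emeasure (tower_measure muY tau) X
    = ennreal (1 / mean_return muY tau) * (\<integral>\<^sup>+ y. (\<Sum>l<tau y. indicator X (y, l)) \<partial>muY)"
proof -
  interpret C: sigma_finite_measure "count_space (UNIV :: nat set)"
    by (rule sigma_finite_measure_count_space)
  define c where "c = mean_return muY tau"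
  define D where "D z = (if snd z < tau (fst z) then ennreal (1 / c) else 0)" for z :: "'a \<times> nat"
  have tower: "tower_measure muY tau = density (muY \<Otimes>\<^sub>M count_space UNIV) D"
    unfolding tower_measure_def D_def c_def
    by (rule arg_cong[where f="density _"]) (auto simp: indicator_def)
  have "(\<lambda>z. snd z < tau (fst z)) \<in> muY \<Otimes>\<^sub>M count_space UNIV \<rightarrow>\<^sub>M count_space UNIV"
    by (rule measurable_compose_countable[where f="\<lambda>k z. snd z < k" and g="\<lambda>z. tau (fst z)"])
       (auto intro: measurable_compose[OF measurable_fst tau])
  then have D_meas: "D \<in> borel_measurable (muY \<Otimes>\<^sub>M count_space UNIV)"
    unfolding D_def by (intro measurable_If) (auto simp: Measurable.pred_def)
  have sum_meas: "(\<lambda>y. \<Sum>l<tau y. indicator X (y, l) :: ennreal) \<in> borel_measurable muY"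
    by (rule measurable_compose_countable[where f="\<lambda>k y. \<Sum>l<k. indicator X (y, l)" and g=tau])
       (use X tau in measurable)
  have "emeasure (tower_measure muY tau) X
      = (\<integral>\<^sup>+ z. D z * indicator X z \<partial>(muY \<Otimes>\<^sub>M count_space UNIV))"
    unfolding tower using D_meas X by (rule emeasure_density)
  also have "\<dots> = (\<integral>\<^sup>+ y. \<integral>\<^sup>+ l. D (y, l) * indicator X (y, l) \<partial>count_space UNIV \<partial>muY)"
    using D_meas X by (intro C.nn_integral_fst[symmetric]) auto
  also have "\<dots> = (\<integral>\<^sup>+ y. ennreal (1 / c) * (\<Sum>l<tau y. indicator X (y, l)) \<partial>muY)"
  proof (rule nn_integral_cong)
    fix y
    have "(\<integral>\<^sup>+ l. D (y, l) * indicator X (y, l) \<partial>count_space UNIV)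
        = (\<integral>\<^sup>+ l. ennreal (1 / c) * (indicator X (y, l) * indicator {..<tau y} l) \<partial>count_space UNIV)"
      by (intro nn_integral_cong) (simp add: D_def indicator_def)
    also have "\<dots> = ennreal (1 / c) * (\<integral>\<^sup>+ l. indicator X (y, l) \<partial>count_space {..<tau y})"
      by (simp add: nn_integral_cmult nn_integral_count_space_indicator)
    also have "\<dots> = ennreal (1 / c) * (\<Sum>l<tau y. indicator X (y, l))"
      by (simp add: nn_integral_count_space_finite)
    finally show "(\<integral>\<^sup>+ l. D (y, l) * indicator X (y, l) \<partial>count_space UNIV)
        = ennreal (1 / c) * (\<Sum>l<tau y. indicator X (y, l))" .
  qed
  also have "\<dots> = ennreal (1 / c) * (\<integral>\<^sup>+ y. (\<Sum>l<tau y. indicator X (y, l)) \<partial>muY)"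
    using sum_meas by (rule nn_integral_cmult)
  finally show ?thesis unfolding c_def .
qed

lemma mean_return_ge_1:
  assumes "prob_space muY" and "\<forall>y\<in>space muY. 1 \<le> tau y"
    and "integrable muY (\<lambda>y. real (tau y))"
  shows "1 \<le> mean_return muY tau"
proof -
  interpret prob_space muY by fact
  have "(\<integral>y. 1 \<partial>muY) \<le> (\<integral>y. real (tau y) \<partial>muY)"
    by (rule integral_mono) (use assms in auto)
  then show ?thesis by (simp add: mean_return_def prob_space)
qed

lemma prob_space_tower_measure:
  assumes tau: "tau \<in> muY \<rightarrow>\<^sub>M count_space UNIV"
    and tau_int: "integrable muY (\<lambda>y. real (tau y))" and c_pos: "0 < mean_return muY tau"
  shows "prob_space (tower_measure muY tau)"
proof
  let ?c = "mean_return muY tau"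
  have "emeasure (tower_measure muY tau) (space (muY \<Otimes>\<^sub>M count_space UNIV))
      = ennreal (1 / ?c) * (\<integral>\<^sup>+ y. ennreal (real (tau y)) \<partial>muY)"
    using tau by (subst emeasure_tower_measure)
      (auto intro!: arg_cong2[where f="(*)"] nn_integral_cong
        simp: space_pair_measure ennreal_of_nat_eq_real_of_nat)
  also have "(\<integral>\<^sup>+ y. ennreal (real (tau y)) \<partial>muY) = ennreal ?c"
    using tau_int by (simp add: nn_integral_eq_integral mean_return_def)
  finally show "emeasure (tower_measure muY tau) (space (tower_measure muY tau)) = 1"
    using c_pos by (simp add: tower_measure_def ennreal_mult[symmetric])
qed

definition column_visits :: "('a \<Rightarrow> 'a) \<Rightarrow> ('a \<Rightarrow> nat) \<Rightarrow> 'a set \<Rightarrow> 'a \<Rightarrow> ennreal" where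
  "column_visits f tau A y = (\<Sum>l<tau y. indicator A ((f ^^ l) y))"

lemma borel_measurable_column_visits:
  assumes "\<And>l. (f ^^ l) \<in> N \<rightarrow>\<^sub>M M" and "tau \<in> N \<rightarrow>\<^sub>M count_space UNIV" and "A \<in> sets M"
  shows "column_visits f tau A \<in> borel_measurable N"
  unfolding column_visits_def
  by (rule measurable_compose_countable[where f="\<lambda>k y. \<Sum>l<k. indicator A ((f ^^ l) y)" and g=tau])
     (use assms in measurable)

lemma one_le_column_visits:
  assumes "l < tau y" and "(f ^^ l) y \<in> A"
  shows "1 \<le> column_visits f tau A y"
  unfolding column_visits_def
  using member_le_sum[of l "{..<tau y}" "\<lambda>l. indicator A ((f ^^ l) y) :: ennreal"] assms by simp

lemma emeasure_induced_measure:
  assumes f_pow: "\<And>l. (f ^^ l) \<in> muY \<rightarrow>\<^sub>M M" and tau: "tau \<in> muY \<rightarrow>\<^sub>M count_space UNIV"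
    and A: "A \<in> sets M"
  shows "emeasure (induced_measure M f muY tau) A
    = ennreal (1 / mean_return muY tau) * (\<integral>\<^sup>+ y. column_visits f tau A y \<partial>muY)"
proof -
  let ?X = "tower_proj f -` A \<inter> space (muY \<Otimes>\<^sub>M count_space UNIV)"
  have proj: "tower_proj f \<in> muY \<Otimes>\<^sub>M count_space UNIV \<rightarrow>\<^sub>M M"
    using f_pow by (rule measurable_tower_proj)
  have "emeasure (induced_measure M f muY tau) A = emeasure (tower_measure muY tau) ?X"
    unfolding induced_measure_def using proj A
    by (subst emeasure_distr) (auto simp: tower_measure_def)
  also have "\<dots> = ennreal (1 / mean_return muY tau) * (\<integral>\<^sup>+ y. (\<Sum>l<tau y. indicator ?X (y, l)) \<partial>muY)"
    using tau measurable_sets[OF proj A] by (rule emeasure_tower_measure)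
  also have "(\<integral>\<^sup>+ y. (\<Sum>l<tau y. indicator ?X (y, l)) \<partial>muY) = (\<integral>\<^sup>+ y. column_visits f tau A y \<partial>muY)"
    by (intro nn_integral_cong sum.cong)
       (auto simp: column_visits_def tower_proj_def indicator_def space_pair_measure)
  finally show ?thesis .
qed

lemma prob_space_induced_measure:
  assumes f_pow: "\<And>l. (f ^^ l) \<in> muY \<rightarrow>\<^sub>M M" and tau: "tau \<in> muY \<rightarrow>\<^sub>M count_space UNIV"
    and tau_int: "integrable muY (\<lambda>y. real (tau y))" and c_pos: "0 < mean_return muY tau"
  shows "prob_space (induced_measure M f muY tau)"
proof -
  interpret prob_space "tower_measure muY tau"
    using tau tau_int c_pos by (rule prob_space_tower_measure)
  have "tower_proj f \<in> tower_measure muY tau \<rightarrow>\<^sub>M M"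
    using measurable_tower_proj[OF f_pow] by (simp add: tower_measure_def)
  then show ?thesis
    unfolding induced_measure_def by (rule prob_space_distr)
qed

lemma nn_integral_column_visits:
  assumes f_pow: "\<And>l. (f ^^ l) \<in> muY \<rightarrow>\<^sub>M M" and tau: "tau \<in> muY \<rightarrow>\<^sub>M count_space UNIV"
    and tau_int: "integrable muY (\<lambda>y. real (tau y))" and c_pos: "0 < mean_return muY tau"
    and A: "A \<in> sets M"
  shows "(\<integral>\<^sup>+ y. column_visits f tau A y \<partial>muY)
    = ennreal (mean_return muY tau * measure (induced_measure M f muY tau) A)"
proof -
  interpret prob_space "induced_measure M f muY tau"
    using f_pow tau tau_int c_pos by (rule prob_space_induced_measure)
  have "ennreal (mean_return muY tau) * ennreal (1 / mean_return muY tau) = 1"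
    using c_pos by (simp add: ennreal_mult[symmetric])
  then show ?thesis
    using emeasure_induced_measure[OF f_pow tau A] c_pos
    by (simp add: emeasure_eq_measure ennreal_mult mult.assoc[symmetric])
qed

lemma borel_measurable_induced_obs:
  assumes "\<And>l. (f ^^ l) \<in> N \<rightarrow>\<^sub>M M" and "tau \<in> N \<rightarrow>\<^sub>M count_space UNIV"
    and "h \<in> borel_measurable M"
  shows "induced_obs f tau h \<in> borel_measurable N"
  unfolding induced_obs_def
  by (rule measurable_compose_countable[where f="\<lambda>k y. \<Sum>l<k. h ((f ^^ l) y)" and g=tau])
     (use assms in measurable)

lemma induced_obs_gt_imp_level_gt:
  assumes "t < induced_obs f tau h y" and "tau y \<le> n" and "0 \<le> t"
  shows "\<exists>l<tau y. t / real n < h ((f ^^ l) y)"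
proof (rule ccontr)
  assume "\<not> ?thesis"
  then have "induced_obs f tau h y \<le> (\<Sum>l<tau y. t / real n)"
    unfolding induced_obs_def by (intro sum_mono) auto
  also have "\<dots> = real (tau y) * (t / real n)"
    by simp
  also have "\<dots> \<le> real n * (t / real n)"
    using assms(2,3) by (intro mult_right_mono) auto
  also have "\<dots> \<le> t"
    using assms(3) by (cases "n = 0") auto
  finally show False using assms(1) by simp
qed

lemma measure_induced_obs_gt_le:
  assumes "prob_space muY" and f_pow: "\<And>l. (f ^^ l) \<in> muY \<rightarrow>\<^sub>M M"
    and tau[measurable]: "tau \<in> muY \<rightarrow>\<^sub>M count_space UNIV" and tau_int: "integrable muY (\<lambda>y. real (tau y))"
    and c_pos: "0 < mean_return muY tau" and h: "h \<in> borel_measurable M" and "0 \<le> t"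
  shows "measure muY {y \<in> space muY. t < induced_obs f tau h y}
    \<le> measure muY {y \<in> space muY. n < tau y}
      + mean_return muY tau * measure (induced_measure M f muY tau) {x \<in> space M. t / real n < h x}"
proof -
  interpret prob_space muY by fact
  define A where "A = {x \<in> space M. t / real n < h x}"
  have A: "A \<in> sets M" unfolding A_def using h by measurable
  have [measurable]: "induced_obs f tau h \<in> borel_measurable muY"
    using f_pow tau h by (rule borel_measurable_induced_obs)
  show ?thesis
    unfolding A_def[symmetric]
  proof (rule measure_le_measure_add_nn_integral)
    fix y assume y: "y \<in> {y \<in> space muY. t < induced_obs f tau h y}"
      and "y \<notin> {y \<in> space muY. n < tau y}"
    then obtain l where "l < tau y" and "t / real n < h ((f ^^ l) y)"
      using induced_obs_gt_imp_level_gt[of t f tau h y n] \<open>0 \<le> t\<close> by auto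
    moreover have "(f ^^ l) y \<in> space M" using y measurable_space[OF f_pow] by auto
    ultimately show "1 \<le> column_visits f tau A y"
      by (intro one_le_column_visits) (auto simp: A_def)
  qed (use borel_measurable_column_visits[OF f_pow tau A]
      nn_integral_column_visits[OF f_pow tau tau_int c_pos A] c_pos finite_measure_axioms in auto)
qed

theorem propositionA1:
  fixes M :: "'a measure" and f :: "'a \<Rightarrow> 'a" and Y :: "'a set"
    and tau :: "'a \<Rightarrow> nat" and muY :: "'a measure" and h :: "'a \<Rightarrow> real"
  assumes f_meas: "f \<in> M \<rightarrow>\<^sub>M M"
    and Y_meas: "Y \<in> sets M"
    and muY_space: "sets muY = sets (restrict_space M Y)"
    and muY_prob: "prob_space muY"
    and tau_pos: "\<forall>y\<in>Y. tau y \<ge> 1"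
    and tau_int: "integrable muY (\<lambda>y. real (tau y))"
    and F_meas: "(\<lambda>y. (f ^^ tau y) y) \<in> muY \<rightarrow>\<^sub>M muY"
    and F_inv: "distr muY muY (\<lambda>y. (f ^^ tau y) y) = muY"
    and h_meas: "h \<in> borel_measurable M"
    and h_pos: "\<forall>x\<in>space M. h x > 0"
  shows "\<forall>(n::nat) (t::real). n \<ge> 1 \<longrightarrow> t > 1 \<longrightarrow>
     measure muY {y \<in> space muY. induced_obs f tau h y > t}
       \<le> measure muY {y \<in> space muY. tau y > n}
         + mean_return muY tau * measure (induced_measure M f muY tau) {x \<in> space M. h x > t / real n}"
proof -
  have "Y \<subseteq> space M" using Y_meas sets.sets_into_space by blast
  then have "space muY = Y"
    using sets_eq_imp_space_eq[OF muY_space] by (simp add: space_restrict_space) blast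
  then have "1 \<le> mean_return muY tau"
    using muY_prob tau_pos tau_int by (intro mean_return_ge_1) auto
  moreover have "(f ^^ l) \<in> muY \<rightarrow>\<^sub>M M" for l
    using measurable_restrict_space1[OF measurable_compose_n[OF f_meas]]
      measurable_cong_sets[OF muY_space refl] by blast
  moreover have "tau \<in> muY \<rightarrow>\<^sub>M count_space UNIV"
    using borel_measurable_integrable[OF tau_int] by (rule measurable_nat_of_real)
  ultimately show ?thesis
    using measure_induced_obs_gt_le[OF muY_prob _ _ tau_int _ h_meas] by auto
qed

end
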